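(* Let $P$ and $Q$ be irreducible transition matrices on the finite set $S$, both reversible with respect to $\pi$, whose eigenvalues (counting multiplicity) are identical, and suppose $P\ne Q$. Then $P$ does not efficiency-dominate $Q$, and $Q$ does not efficiency-dominate $P$.
   Context: $S$ is a finite set, and $\pi$ is a probability distribution on $S$ with $\pi(x)>0$ for all $x$. A transition matrix $P$ is reversible with respect to $\pi$ if $\pi(x)P(x,y)=\pi(y)P(y,x)$ for all $x,y$; irreducible if every state can be reached from every other with positive probability in some number of steps. For a Markov chain $X_1,X_2,\dots$ with transition matrix $P$ and $X_1\sim\pi$, $v(f,P)=\lim_{N\to\infty}\frac1N\mathrm{Var}\big(\sum_{i=1}^N f(X_i)\big)$. $P$ efficiency-dominates $Q$ if $v(f,P)\le v(f,Q)$ for all $f:S\to\mathbb R$. *)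

theory Defs
  imports "Jordan_Normal_Form.Char_Poly"
begin

text \<open>The finite state space S is represented as {0..<n}; transition matrices are
  real n x n matrices (Jordan_Normal_Form), a distribution is a function nat => real.\<close>

definition prob_dist :: "nat \<Rightarrow> (nat \<Rightarrow> real) \<Rightarrow> bool" where
  "prob_dist n \<pi> \<longleftrightarrow> (\<forall>x<n. \<pi> x > 0) \<and> (\<Sum>x<n. \<pi> x) = 1"

definition transition_mat :: "nat \<Rightarrow> real mat \<Rightarrow> bool" where
  "transition_mat n P \<longleftrightarrow> P \<in> carrier_mat n n \<and>
     (\<forall>x<n. \<forall>y<n. P $$ (x, y) \<ge> 0) \<and> (\<forall>x<n. (\<Sum>y<n. P $$ (x, y)) = 1)"

definition reversible :: "nat \<Rightarrow> (nat \<Rightarrow> real) \<Rightarrow> real mat \<Rightarrow> bool" where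
  "reversible n \<pi> P \<longleftrightarrow> (\<forall>x<n. \<forall>y<n. \<pi> x * P $$ (x, y) = \<pi> y * P $$ (y, x))"

definition irreducible_mc :: "nat \<Rightarrow> real mat \<Rightarrow> bool" where
  "irreducible_mc n P \<longleftrightarrow> (\<forall>x<n. \<forall>y<n. \<exists>k. (P ^\<^sub>m k) $$ (x, y) > 0)"

text \<open>Law of X_i (i \<ge> 1) for the chain started with X_1 ~ \<pi>.\<close>
definition marg :: "nat \<Rightarrow> (nat \<Rightarrow> real) \<Rightarrow> real mat \<Rightarrow> nat \<Rightarrow> nat \<Rightarrow> real" where
  "marg n \<pi> P i x = (\<Sum>z<n. \<pi> z * (P ^\<^sub>m (i - 1)) $$ (z, x))"

text \<open>Joint law of (X_i, X_j).\<close>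
definition joint :: "nat \<Rightarrow> (nat \<Rightarrow> real) \<Rightarrow> real mat \<Rightarrow> nat \<Rightarrow> nat \<Rightarrow> nat \<Rightarrow> nat \<Rightarrow> real" where
  "joint n \<pi> P i j x y =
     (if i \<le> j then marg n \<pi> P i x * (P ^\<^sub>m (j - i)) $$ (x, y)
      else marg n \<pi> P j y * (P ^\<^sub>m (i - j)) $$ (y, x))"

text \<open>Var(\<Sum>_{i=1}^N f(X_i)) = \<Sum>_{i,j} Cov(f(X_i), f(X_j)).\<close>
definition var_sum :: "nat \<Rightarrow> (nat \<Rightarrow> real) \<Rightarrow> real mat \<Rightarrow> (nat \<Rightarrow> real) \<Rightarrow> nat \<Rightarrow> real" where
  "var_sum n \<pi> P f N =
     (\<Sum>i\<in>{1..N}. \<Sum>j\<in>{1..N}.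
        (\<Sum>x<n. \<Sum>y<n. joint n \<pi> P i j x y * f x * f y)
        - (\<Sum>x<n. marg n \<pi> P i x * f x) * (\<Sum>y<n. marg n \<pi> P j y * f y))"

definition asymp_var :: "nat \<Rightarrow> (nat \<Rightarrow> real) \<Rightarrow> real mat \<Rightarrow> (nat \<Rightarrow> real) \<Rightarrow> real" where
  "asymp_var n \<pi> P f = lim (\<lambda>N. var_sum n \<pi> P f N / real N)"

definition efficiency_dominates :: "nat \<Rightarrow> (nat \<Rightarrow> real) \<Rightarrow> real mat \<Rightarrow> real mat \<Rightarrow> bool" where
  "efficiency_dominates n \<pi> P Q \<longleftrightarrow> (\<forall>f. asymp_var n \<pi> P f \<le> asymp_var n \<pi> Q f)"

end

theory Submission
  imports Defs
begin

text \<open>Equal characteristic polynomials have equal traces, so \<open>D = P - Q\<close> is a nonzero,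
  trace-free operator that is self-adjoint in \<open>L\<^sup>2(\<pi>)\<close>; hence \<open>\<langle>h, D h\<rangle> > 0\<close> for some \<open>h\<close>.
  Put \<open>f = h - Q h\<close> and solve the Poisson equation \<open>f = g - P g\<close>. For a reversible chain whose
  Poisson equation is solved by \<open>g\<close>, the asymptotic variance is \<open>2\<langle>f, g\<rangle> - \<langle>f, f\<rangle>\<close>, so
  \<open>v(f, P) - v(f, Q) = 2(\<langle>f, g\<rangle> - \<langle>f, h\<rangle>)\<close>. With \<open>u = g - h\<close> this difference equals
  \<open>2\<langle>h, D h\<rangle> + 2(\<langle>u, u\<rangle> - \<langle>u, P u\<rangle>)\<close>, and the second term is nonnegative because the
  Dirichlet form of \<open>P\<close> is. Hence \<open>v(f, P) > v(f, Q)\<close>; exchanging \<open>P\<close> and \<open>Q\<close> gives the rest.\<close>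

section \<open>The trace as a coefficient of the characteristic polynomial\<close>

lemma coeff_prod_linear_factors:
  fixes a :: "nat \<Rightarrow> 'a::comm_ring_1"
  shows "coeff (\<Prod>i<Suc m. [:- a i, 1:]) (Suc m) = 1 \<and>
         coeff (\<Prod>i<Suc m. [:- a i, 1:]) m = - (\<Sum>i<Suc m. a i)"
proof (induction m)
  case 0
  then show ?case by simp
next
  case (Suc m)
  let ?q = "\<Prod>i<Suc m. [:- a i, 1:]"
  have split: "(\<Prod>i<Suc (Suc m). [:- a i, 1:]) = [:- a (Suc m), 1:] * ?q"
    by (simp add: mult.commute)
  have "degree ?q \<le> Suc m"
    by (rule order.trans[OF degree_prod_sum_le]) auto
  then have "coeff ?q (Suc (Suc m)) = 0" by (intro coeff_eq_0) auto
  then show ?case unfolding split using Suc by (simp add: mult_pCons_left)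
qed

lemma char_poly_matrix_index:
  assumes "A \<in> carrier_mat n n" "i < n" "j < n"
  shows "char_poly_matrix A $$ (i, j) =
    (if i = j then [:- A $$ (i, i), 1:] else [:- A $$ (i, j):])"
  using assms unfolding char_poly_matrix_def by auto

text \<open>A permutation other than the identity moves at least two indices, and only the diagonal
  entries of the characteristic matrix have degree one.\<close>

lemma degree_char_poly_matrix_perm_prod:
  assumes A: "A \<in> carrier_mat n n" and p: "p permutes {0..<n}" and "p \<noteq> id"
  shows "degree (\<Prod>i = 0..<n. char_poly_matrix A $$ (i, p i)) < n - 1"
proof -
  obtain i where i: "i < n" and pi: "p i \<noteq> i"
    using p \<open>p \<noteq> id\<close> by (metis atLeastLessThan_iff order_refl permutes_natset_le)
  have pin: "p i < n" using permutes_in_image[OF p, of i] i by auto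
  have ppi: "p (p i) \<noteq> p i" using pi p by (metis permutes_inj injD)
  have "degree (\<Prod>i = 0..<n. char_poly_matrix A $$ (i, p i))
      \<le> (\<Sum>j = 0..<n. degree (char_poly_matrix A $$ (j, p j)))"
    by (rule order.trans[OF degree_prod_sum_le]) auto
  also have "\<dots> \<le> (\<Sum>j = 0..<n. if p j = j then 1 else 0)"
  proof (rule sum_mono)
    fix j assume "j \<in> {0..<n}"
    then have "j < n" "p j < n" using p by (auto simp: permutes_in_image)
    then show "degree (char_poly_matrix A $$ (j, p j)) \<le> (if p j = j then 1 else 0)"
      using char_poly_matrix_index[OF A] by auto
  qed
  also have "\<dots> = card {j\<in>{0..<n}. p j = j}"
    by (simp add: sum.If_cases Int_def conj_commute)
  also have "\<dots> \<le> card ({0..<n} - {i, p i})"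
    by (rule card_mono) (use pi ppi in auto)
  also have "\<dots> = n - 2" using i pin pi by (simp add: card_Diff_subset)
  finally show ?thesis using i pin pi by linarith
qed

lemma coeff_char_poly_trace:
  fixes A :: "'a::comm_ring_1 mat"
  assumes A: "A \<in> carrier_mat n n" and "n > 0"
  shows "coeff (char_poly A) (n - 1) = - (\<Sum>i<n. A $$ (i, i))"
proof -
  let ?S = "{p. p permutes {0..<n}}"
  let ?t = "\<lambda>p. signof p * (\<Prod>i = 0..<n. char_poly_matrix A $$ (i, p i))"
  have "coeff (char_poly A) (n - 1) = (\<Sum>p\<in>?S. coeff (?t p) (n - 1))"
    unfolding char_poly_def det_def'[OF char_poly_matrix_closed[OF A]] by (simp add: coeff_sum)
  also have "\<dots> = coeff (?t id) (n - 1) + (\<Sum>p\<in>?S - {id}. coeff (?t p) (n - 1))"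
    by (rule sum.remove) (simp_all add: finite_permutations permutes_id)
  also have "(\<Sum>p\<in>?S - {id}. coeff (?t p) (n - 1)) = 0"
    using degree_char_poly_matrix_perm_prod[OF A] by (intro sum.neutral) (auto intro: coeff_eq_0)
  also have "(\<Prod>i = 0..<n. char_poly_matrix A $$ (i, id i)) = (\<Prod>i<n. [:- A $$ (i, i), 1:])"
    using char_poly_matrix_index[OF A] by (auto simp: atLeast0LessThan intro!: prod.cong)
  also obtain m where "n = Suc m" using \<open>n > 0\<close> by (cases n) auto
  then have "coeff (signof id * (\<Prod>i<n. [:- A $$ (i, i), 1:])) (n - 1) = - (\<Sum>i<n. A $$ (i, i))"
    using coeff_prod_linear_factors[of "\<lambda>i. A $$ (i, i)" m] by simp
  finally show ?thesis by simp
qed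

lemma trace_eq_of_char_poly_eq:
  fixes A B :: "'a::comm_ring_1 mat"
  assumes "A \<in> carrier_mat n n" "B \<in> carrier_mat n n" "char_poly A = char_poly B"
  shows "(\<Sum>i<n. A $$ (i, i)) = (\<Sum>i<n. B $$ (i, i))"
proof (cases "n = 0")
  case False
  then have "- (\<Sum>i<n. A $$ (i, i)) = - (\<Sum>i<n. B $$ (i, i))"
    using assms by (simp add: coeff_char_poly_trace[symmetric])
  then show ?thesis by simp
qed simp

definition pi_inner :: "nat \<Rightarrow> (nat \<Rightarrow> real) \<Rightarrow> (nat \<Rightarrow> real) \<Rightarrow> (nat \<Rightarrow> real) \<Rightarrow> real" where
  "pi_inner n \<pi> u v = (\<Sum>x<n. \<pi> x * u x * v x)"

definition mat_apply :: "nat \<Rightarrow> real mat \<Rightarrow> (nat \<Rightarrow> real) \<Rightarrow> nat \<Rightarrow> real" where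
  "mat_apply n M u x = (\<Sum>y<n. M $$ (x, y) * u y)"

lemma pi_inner_commute: "pi_inner n \<pi> u v = pi_inner n \<pi> v u"
  unfolding pi_inner_def by (simp add: mult_ac)

lemma pi_inner_diff_left: "pi_inner n \<pi> (\<lambda>x. u x - v x) w = pi_inner n \<pi> u w - pi_inner n \<pi> v w"
  unfolding pi_inner_def by (simp add: left_diff_distrib right_diff_distrib sum_subtractf)

lemma pi_inner_diff_right: "pi_inner n \<pi> u (\<lambda>x. v x - w x) = pi_inner n \<pi> u v - pi_inner n \<pi> u w"
  unfolding pi_inner_def by (simp add: right_diff_distrib sum_subtractf)

lemma pi_inner_cong:
  "(\<And>x. x < n \<Longrightarrow> u x = u' x) \<Longrightarrow> (\<And>x. x < n \<Longrightarrow> v x = v' x) \<Longrightarrow>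
    pi_inner n \<pi> u v = pi_inner n \<pi> u' v'"
  unfolding pi_inner_def by (intro sum.cong) auto

lemma mat_apply_cong: "(\<And>y. y < n \<Longrightarrow> u y = v y) \<Longrightarrow> mat_apply n M u x = mat_apply n M v x"
  unfolding mat_apply_def by (intro sum.cong) auto

lemma mat_apply_diff:
  "mat_apply n M (\<lambda>y. u y - v y) x = mat_apply n M u x - mat_apply n M v x"
  unfolding mat_apply_def by (simp add: right_diff_distrib sum_subtractf)

lemma pi_inner_mat_apply_eq_sum:
  "pi_inner n \<pi> u (mat_apply n M v) = (\<Sum>x<n. \<Sum>y<n. \<pi> x * M $$ (x, y) * u x * v y)"
  unfolding pi_inner_def mat_apply_def by (simp add: sum_distrib_left mult_ac)

lemma mat_apply_one:
  assumes "x < n"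
  shows "mat_apply n (1\<^sub>m n) u x = u x"
proof -
  have "mat_apply n (1\<^sub>m n) u x = (\<Sum>y<n. if x = y then u y else 0)"
    unfolding mat_apply_def using assms by (intro sum.cong) auto
  then show ?thesis using assms by simp
qed

lemma mat_apply_mult:
  assumes A: "A \<in> carrier_mat n n" and B: "B \<in> carrier_mat n n" and x: "x < n"
  shows "mat_apply n (A * B) u x = mat_apply n A (mat_apply n B u) x"
proof -
  have "mat_apply n (A * B) u x = (\<Sum>y<n. \<Sum>z<n. A $$ (x, z) * B $$ (z, y) * u y)"
    unfolding mat_apply_def using A B x
    by (simp add: scalar_prod_def atLeast0LessThan sum_distrib_right)
  also have "\<dots> = mat_apply n A (mat_apply n B u) x"
    unfolding mat_apply_def by (subst sum.swap) (simp add: sum_distrib_left mult.assoc)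
  finally show ?thesis .
qed

lemma mat_apply_pow:
  assumes P: "P \<in> carrier_mat n n"
  shows "x < n \<Longrightarrow> mat_apply n (P ^\<^sub>m k) u x = (mat_apply n P ^^ k) u x"
proof (induction k arbitrary: u)
  case 0
  then show ?case using P by (simp add: mat_apply_one)
next
  case (Suc k)
  then show ?case
    using mat_apply_mult[OF pow_carrier_mat[OF P] P Suc.prems]
    by (simp add: funpow_Suc_right del: funpow.simps)
qed

lemma mat_apply_pow_Suc_left:
  assumes P: "P \<in> carrier_mat n n" and x: "x < n"
  shows "mat_apply n (P ^\<^sub>m Suc k) u x = mat_apply n P (mat_apply n (P ^\<^sub>m k) u) x"
proof -
  have "mat_apply n (P ^\<^sub>m Suc k) u x = mat_apply n P ((mat_apply n P ^^ k) u) x"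
    using mat_apply_pow[OF P x, of "Suc k"] by simp
  also have "\<dots> = mat_apply n P (mat_apply n (P ^\<^sub>m k) u) x"
    using mat_apply_pow[OF P] by (intro mat_apply_cong) simp
  finally show ?thesis .
qed

lemma transition_mat_carrier: "transition_mat n P \<Longrightarrow> P \<in> carrier_mat n n"
  unfolding transition_mat_def by simp

lemma transition_mat_pow:
  assumes P: "transition_mat n P"
  shows "transition_mat n (P ^\<^sub>m k)"
proof (induction k)
  case 0
  show ?case using transition_mat_carrier[OF P] unfolding transition_mat_def by auto
next
  case (Suc k)
  have c: "P \<in> carrier_mat n n" using P by (rule transition_mat_carrier)
  have entry: "(P ^\<^sub>m k * P) $$ (x, y) = (\<Sum>z<n. (P ^\<^sub>m k) $$ (x, z) * P $$ (z, y))"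
    if "x < n" "y < n" for x y
    using c that by (simp add: scalar_prod_def atLeast0LessThan)
  have row_sum: "(\<Sum>y<n. (P ^\<^sub>m k * P) $$ (x, y)) = 1" if "x < n" for x
  proof -
    have "(\<Sum>y<n. (P ^\<^sub>m k * P) $$ (x, y)) = (\<Sum>z<n. (P ^\<^sub>m k) $$ (x, z) * (\<Sum>y<n. P $$ (z, y)))"
      using that by (simp add: entry sum_distrib_left) (rule sum.swap)
    also have "\<dots> = 1" using P Suc that unfolding transition_mat_def by simp
    finally show ?thesis .
  qed
  have nonneg: "(P ^\<^sub>m k * P) $$ (x, y) \<ge> 0" if "x < n" "y < n" for x y
    unfolding entry[OF that] using P Suc that unfolding transition_mat_def
    by (auto intro!: sum_nonneg)
  have "P ^\<^sub>m k * P \<in> carrier_mat n n" by (rule mult_carrier_mat[OF pow_carrier_mat[OF c] c])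
  then show ?case using nonneg row_sum unfolding pow_mat.simps(2) transition_mat_def by blast
qed

lemma transition_mat_entry_le_one:
  assumes P: "transition_mat n P" and "x < n" "y < n"
  shows "P $$ (x, y) \<le> 1"
proof -
  have "P $$ (x, y) \<le> (\<Sum>z<n. P $$ (x, z))"
    by (rule member_le_sum) (use assms in \<open>auto simp: transition_mat_def\<close>)
  then show ?thesis using assms unfolding transition_mat_def by simp
qed

lemma abs_mat_apply_transition_le:
  assumes P: "transition_mat n P" and x: "x < n"
  shows "\<bar>mat_apply n P v x\<bar> \<le> (\<Sum>y<n. \<bar>v y\<bar>)"
proof -
  have "\<bar>mat_apply n P v x\<bar> \<le> (\<Sum>y<n. \<bar>P $$ (x, y) * v y\<bar>)"
    unfolding mat_apply_def by (rule sum_abs)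
  also have "\<dots> \<le> (\<Sum>y<n. \<bar>v y\<bar>)"
    using P x transition_mat_entry_le_one[OF P x]
    by (intro sum_mono) (auto simp: transition_mat_def abs_mult mult_left_le_one_le)
  finally show ?thesis .
qed

lemma abs_pi_inner_transition_le:
  assumes P: "transition_mat n P"
  shows "\<bar>pi_inner n \<pi> u (mat_apply n P v)\<bar> \<le> (\<Sum>x<n. \<bar>\<pi> x * u x\<bar>) * (\<Sum>y<n. \<bar>v y\<bar>)"
proof -
  have "\<bar>pi_inner n \<pi> u (mat_apply n P v)\<bar> \<le> (\<Sum>x<n. \<bar>\<pi> x * u x\<bar> * \<bar>mat_apply n P v x\<bar>)"
    unfolding pi_inner_def by (rule order.trans[OF sum_abs]) (simp add: abs_mult)
  also have "\<dots> \<le> (\<Sum>x<n. \<bar>\<pi> x * u x\<bar> * (\<Sum>y<n. \<bar>v y\<bar>))"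
    using abs_mat_apply_transition_le[OF P] by (intro sum_mono mult_left_mono) auto
  finally show ?thesis by (simp add: sum_distrib_right)
qed

lemma reversible_stationary:
  assumes P: "transition_mat n P" and R: "reversible n \<pi> P" and y: "y < n"
  shows "(\<Sum>x<n. \<pi> x * P $$ (x, y)) = \<pi> y"
proof -
  have "(\<Sum>x<n. \<pi> x * P $$ (x, y)) = (\<Sum>x<n. \<pi> y * P $$ (y, x))"
    using R y unfolding reversible_def by (intro sum.cong) auto
  also have "\<dots> = \<pi> y"
    using P y unfolding transition_mat_def by (simp add: sum_distrib_left[symmetric])
  finally show ?thesis .
qed

lemma reversible_stationary_pow:
  assumes P: "transition_mat n P" and R: "reversible n \<pi> P"
  shows "y < n \<Longrightarrow> (\<Sum>x<n. \<pi> x * (P ^\<^sub>m k) $$ (x, y)) = \<pi> y"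
proof (induction k arbitrary: y)
  case 0
  then show ?case using transition_mat_carrier[OF P] by (simp add: if_distrib cong: if_cong)
next
  case (Suc k)
  have c: "P \<in> carrier_mat n n" using P by (rule transition_mat_carrier)
  have "(\<Sum>x<n. \<pi> x * (P ^\<^sub>m Suc k) $$ (x, y))
      = (\<Sum>x<n. \<Sum>z<n. \<pi> x * (P ^\<^sub>m k) $$ (x, z) * P $$ (z, y))"
    using c Suc.prems
    by (simp add: scalar_prod_def atLeast0LessThan sum_distrib_left mult.assoc)
  also have "\<dots> = (\<Sum>z<n. (\<Sum>x<n. \<pi> x * (P ^\<^sub>m k) $$ (x, z)) * P $$ (z, y))"
    by (subst sum.swap) (simp add: sum_distrib_right)
  also have "\<dots> = \<pi> y"
    using Suc.IH reversible_stationary[OF P R Suc.prems] by simp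
  finally show ?case .
qed

lemma marg_stationary:
  "transition_mat n P \<Longrightarrow> reversible n \<pi> P \<Longrightarrow> x < n \<Longrightarrow> marg n \<pi> P i x = \<pi> x"
  unfolding marg_def by (rule reversible_stationary_pow)

lemma sum_pi_mat_apply:
  assumes P: "transition_mat n P" and R: "reversible n \<pi> P"
  shows "(\<Sum>x<n. \<pi> x * mat_apply n P w x) = (\<Sum>x<n. \<pi> x * w x)"
proof -
  have "(\<Sum>x<n. \<pi> x * mat_apply n P w x) = (\<Sum>x<n. \<Sum>y<n. \<pi> x * P $$ (x, y) * w y)"
    unfolding mat_apply_def by (simp add: sum_distrib_left mult.assoc)
  also have "\<dots> = (\<Sum>y<n. (\<Sum>x<n. \<pi> x * P $$ (x, y)) * w y)"
    by (subst sum.swap) (simp add: sum_distrib_right)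
  finally show ?thesis using reversible_stationary[OF P R] by simp
qed

lemma reversible_self_adjoint:
  assumes R: "reversible n \<pi> P"
  shows "pi_inner n \<pi> u (mat_apply n P v) = pi_inner n \<pi> (mat_apply n P u) v"
proof -
  have "pi_inner n \<pi> u (mat_apply n P v) = (\<Sum>x<n. \<Sum>y<n. \<pi> y * P $$ (y, x) * u x * v y)"
    unfolding pi_inner_mat_apply_eq_sum
    using R unfolding reversible_def by (intro sum.cong) auto
  also have "\<dots> = pi_inner n \<pi> (mat_apply n P u) v"
    unfolding pi_inner_commute[of n \<pi> "mat_apply n P u"] pi_inner_mat_apply_eq_sum
    by (subst sum.swap) (simp add: mult_ac)
  finally show ?thesis .
qed

text \<open>The Dirichlet form \<open>\<langle>u, u\<rangle> - \<langle>u, P u\<rangle> = \<Sum>\<^sub>x\<^sub>y \<pi>(x) P(x,y) (u x - u y)\<^sup>2 / 2\<close> is nonnegative.\<close>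

lemma pi_inner_mat_apply_le:
  assumes P: "transition_mat n P" and R: "reversible n \<pi> P" and pd: "prob_dist n \<pi>"
  shows "pi_inner n \<pi> u (mat_apply n P u) \<le> pi_inner n \<pi> u u"
proof -
  let ?w = "\<lambda>x y. \<pi> x * P $$ (x, y)"
  have "pi_inner n \<pi> u (mat_apply n P u) = (\<Sum>x<n. \<Sum>y<n. ?w x y * (u x * u y))"
    unfolding pi_inner_mat_apply_eq_sum by (simp add: mult_ac)
  also have "\<dots> \<le> (\<Sum>x<n. \<Sum>y<n. ?w x y * ((u x)\<^sup>2 + (u y)\<^sup>2) / 2)"
  proof (intro sum_mono)
    fix x y assume "x \<in> {..<n}" "y \<in> {..<n}"
    then have "?w x y \<ge> 0"
      using P pd unfolding transition_mat_def prob_dist_def by (simp add: less_imp_le)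
    moreover have "u x * u y \<le> ((u x)\<^sup>2 + (u y)\<^sup>2) / 2"
      using sum_squares_bound[of "u x" "u y"] by (simp add: power2_eq_square)
    ultimately show "?w x y * (u x * u y) \<le> ?w x y * ((u x)\<^sup>2 + (u y)\<^sup>2) / 2"
      by (metis mult_left_mono times_divide_eq_right)
  qed
  also have "\<dots> = (\<Sum>x<n. \<Sum>y<n. ?w x y * (u x)\<^sup>2) / 2 + (\<Sum>x<n. \<Sum>y<n. ?w x y * (u y)\<^sup>2) / 2"
    by (simp add: sum_divide_distrib sum.distrib distrib_left add_divide_distrib)
  also have "(\<Sum>x<n. \<Sum>y<n. ?w x y * (u x)\<^sup>2) = (\<Sum>x<n. \<pi> x * (u x)\<^sup>2 * (\<Sum>y<n. P $$ (x, y)))"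
    by (simp add: sum_distrib_left mult_ac)
  also have "\<dots> = pi_inner n \<pi> u u"
    using P unfolding transition_mat_def pi_inner_def by (simp add: power2_eq_square mult_ac)
  also have "(\<Sum>x<n. \<Sum>y<n. ?w x y * (u y)\<^sup>2) = (\<Sum>y<n. (\<Sum>x<n. ?w x y) * (u y)\<^sup>2)"
    by (subst sum.swap) (simp add: sum_distrib_right)
  also have "\<dots> = pi_inner n \<pi> u u"
    using reversible_stationary[OF P R] unfolding pi_inner_def by (simp add: power2_eq_square mult_ac)
  finally show ?thesis by simp
qed

section \<open>Asymptotic variance through the Poisson equation\<close>

definition autocov :: "nat \<Rightarrow> (nat \<Rightarrow> real) \<Rightarrow> real mat \<Rightarrow> (nat \<Rightarrow> real) \<Rightarrow> nat \<Rightarrow> real" where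
  "autocov n \<pi> P f k = pi_inner n \<pi> f (mat_apply n (P ^\<^sub>m k) f)"

lemma var_sum_autocov:
  assumes P: "transition_mat n P" and R: "reversible n \<pi> P"
    and mean: "(\<Sum>x<n. \<pi> x * f x) = 0"
  shows "var_sum n \<pi> P f N =
    (\<Sum>i\<in>{1..N}. \<Sum>j\<in>{1..N}. autocov n \<pi> P f (if i \<le> j then j - i else i - j))"
proof -
  have joint: "(\<Sum>x<n. \<Sum>y<n. joint n \<pi> P i j x y * f x * f y)
      = autocov n \<pi> P f (if i \<le> j then j - i else i - j)" for i j
  proof (cases "i \<le> j")
    case True
    then show ?thesis
      unfolding autocov_def pi_inner_mat_apply_eq_sum joint_def
      by (simp add: marg_stationary[OF P R] mult_ac)
  next
    case False
    then have "(\<Sum>x<n. \<Sum>y<n. joint n \<pi> P i j x y * f x * f y)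
        = (\<Sum>y<n. \<Sum>x<n. \<pi> y * (P ^\<^sub>m (i - j)) $$ (y, x) * f y * f x)"
      unfolding joint_def by (subst sum.swap) (simp add: marg_stationary[OF P R] mult_ac)
    then show ?thesis
      using False unfolding autocov_def pi_inner_mat_apply_eq_sum by simp
  qed
  have "(\<Sum>x<n. marg n \<pi> P i x * f x) = 0" for i
    using mean by (simp add: marg_stationary[OF P R])
  then show ?thesis unfolding var_sum_def joint by simp
qed

lemma sum_sum_second_difference:
  fixes b \<gamma> :: "nat \<Rightarrow> real"
  assumes \<gamma>: "\<And>k. \<gamma> k = b k - 2 * b (Suc k) + b (Suc (Suc k))"
  shows "(\<Sum>i\<in>{1..N}. \<Sum>j\<in>{1..N}. \<gamma> (if i \<le> j then j - i else i - j))
    = real N * (\<gamma> 0 + 2 * (b 1 - b 2)) - 2 * (b 1 - b (Suc N))"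
proof (induction N)
  case 0
  then show ?case by simp
next
  case (Suc N)
  define a where "a k = b k - b (Suc k)" for k
  have edge: "(\<Sum>j\<in>{1..N}. \<gamma> (Suc N - j)) = a 1 - a (Suc N)"
  proof -
    have "(\<Sum>j\<in>{1..N}. \<gamma> (Suc N - j)) = (\<Sum>j\<in>{1..N}. \<gamma> j)"
      by (subst sum.atLeastAtMost_rev) (intro sum.cong, auto)
    also have "\<dots> = - (\<Sum>j\<in>{1..N}. a (Suc j) - a j)"
      unfolding \<gamma> a_def sum_negf[symmetric] by (intro sum.cong) auto
    also have "\<dots> = a 1 - a (Suc N)" by (subst sum_Suc_diff) auto
    finally show ?thesis .
  qed
  let ?G = "\<lambda>i j. \<gamma> (if i \<le> j then j - i else i - j)"
  have row: "(\<Sum>j\<in>{1..N}. ?G (Suc N) j) = a 1 - a (Suc N)"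
    unfolding edge[symmetric] by (intro sum.cong) auto
  have column: "(\<Sum>i\<in>{1..N}. ?G i (Suc N)) = a 1 - a (Suc N)"
    unfolding edge[symmetric] by (intro sum.cong) auto
  have "{1..Suc N} = insert (Suc N) {1..N}" by auto
  then have "(\<Sum>i\<in>{1..Suc N}. \<Sum>j\<in>{1..Suc N}. ?G i j)
      = ?G (Suc N) (Suc N) + (\<Sum>j\<in>{1..N}. ?G (Suc N) j)
        + (\<Sum>i\<in>{1..N}. ?G i (Suc N)) + (\<Sum>i\<in>{1..N}. \<Sum>j\<in>{1..N}. ?G i j)"
    by (simp add: sum.distrib)
  also have "\<dots> = \<gamma> 0 + 2 * (a 1 - a (Suc N)) + (\<Sum>i\<in>{1..N}. \<Sum>j\<in>{1..N}. ?G i j)"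
    using row column by simp
  finally show ?case
    using Suc.IH \<gamma>[of 0] unfolding a_def by (simp add: algebra_simps numeral_2_eq_2)
qed

lemma LIMSEQ_linear_minus_bounded_div:
  fixes s e :: "nat \<Rightarrow> real"
  assumes s: "\<And>N. s N = real N * C - e N" and e: "\<And>N. \<bar>e N\<bar> \<le> B"
  shows "(\<lambda>N. s N / real N) \<longlonglongrightarrow> C"
proof -
  have "(\<lambda>N. e N / real N) \<longlonglongrightarrow> 0"
  proof (rule tendsto_0_le[OF lim_inverse_n])
    have "norm (e N / real N) \<le> norm (inverse (real N)) * B" for N
      using mult_right_mono[OF e[of N], of "inverse (real N)"]
      by (simp add: divide_inverse abs_mult mult.commute)
    then show "\<forall>\<^sub>F N in sequentially. norm (e N / real N) \<le> norm (inverse (real N)) * B"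
      by (simp add: always_eventually)
  qed
  then have "(\<lambda>N. C - e N / real N) \<longlonglongrightarrow> C"
    using tendsto_diff[OF tendsto_const, of "\<lambda>N. e N / real N" 0 sequentially C] by simp
  moreover have "\<forall>\<^sub>F N in sequentially. C - e N / real N = s N / real N"
    using eventually_gt_at_top[of "0::nat"] by eventually_elim (simp add: s field_simps)
  ultimately show ?thesis by (rule Lim_transform_eventually)
qed

lemma pi_inner_mat_apply_pow_zero:
  "P \<in> carrier_mat n n \<Longrightarrow> pi_inner n \<pi> u (mat_apply n (P ^\<^sub>m 0) v) = pi_inner n \<pi> u v"
  by (intro pi_inner_cong) (simp_all add: mat_apply_one)

lemma pi_inner_mat_apply_pow_poisson_right:
  assumes c: "P \<in> carrier_mat n n" and f: "\<And>x. x < n \<Longrightarrow> f x = g x - mat_apply n P g x"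
  shows "pi_inner n \<pi> u (mat_apply n (P ^\<^sub>m k) f)
    = pi_inner n \<pi> u (mat_apply n (P ^\<^sub>m k) g) - pi_inner n \<pi> u (mat_apply n (P ^\<^sub>m Suc k) g)"
proof -
  have "mat_apply n (P ^\<^sub>m k) f x = mat_apply n (P ^\<^sub>m k) g x - mat_apply n (P ^\<^sub>m Suc k) g x"
    if x: "x < n" for x
  proof -
    have "mat_apply n (P ^\<^sub>m k) f x = mat_apply n (P ^\<^sub>m k) (\<lambda>y. g y - mat_apply n P g y) x"
      using f by (rule mat_apply_cong)
    also have "\<dots> = mat_apply n (P ^\<^sub>m k) g x - mat_apply n (P ^\<^sub>m k) (mat_apply n P g) x"
      by (rule mat_apply_diff)
    also have "mat_apply n (P ^\<^sub>m k) (mat_apply n P g) x = mat_apply n (P ^\<^sub>m Suc k) g x"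
      using mat_apply_mult[OF pow_carrier_mat[OF c] c x] by simp
    finally show ?thesis .
  qed
  then have "pi_inner n \<pi> u (mat_apply n (P ^\<^sub>m k) f)
      = pi_inner n \<pi> u (\<lambda>x. mat_apply n (P ^\<^sub>m k) g x - mat_apply n (P ^\<^sub>m Suc k) g x)"
    by (intro pi_inner_cong) simp_all
  then show ?thesis unfolding pi_inner_diff_right .
qed

lemma pi_inner_mat_apply_pow_poisson_left:
  assumes R: "reversible n \<pi> P" and c: "P \<in> carrier_mat n n"
    and f: "\<And>x. x < n \<Longrightarrow> f x = g x - mat_apply n P g x"
  shows "pi_inner n \<pi> f (mat_apply n (P ^\<^sub>m k) w)
    = pi_inner n \<pi> g (mat_apply n (P ^\<^sub>m k) w) - pi_inner n \<pi> g (mat_apply n (P ^\<^sub>m Suc k) w)"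
proof -
  have "pi_inner n \<pi> f (mat_apply n (P ^\<^sub>m k) w)
      = pi_inner n \<pi> (\<lambda>x. g x - mat_apply n P g x) (mat_apply n (P ^\<^sub>m k) w)"
    using f by (intro pi_inner_cong) simp_all
  also have "\<dots> = pi_inner n \<pi> g (mat_apply n (P ^\<^sub>m k) w)
      - pi_inner n \<pi> (mat_apply n P g) (mat_apply n (P ^\<^sub>m k) w)"
    by (rule pi_inner_diff_left)
  also have "pi_inner n \<pi> (mat_apply n P g) (mat_apply n (P ^\<^sub>m k) w)
      = pi_inner n \<pi> g (mat_apply n P (mat_apply n (P ^\<^sub>m k) w))"
    by (rule reversible_self_adjoint[OF R, symmetric])
  also have "\<dots> = pi_inner n \<pi> g (mat_apply n (P ^\<^sub>m Suc k) w)"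
    by (intro pi_inner_cong) (simp_all only: mat_apply_pow_Suc_left[OF c])
  finally show ?thesis .
qed

lemma autocov_poisson:
  assumes R: "reversible n \<pi> P" and c: "P \<in> carrier_mat n n"
    and f: "\<And>x. x < n \<Longrightarrow> f x = g x - mat_apply n P g x"
  shows "autocov n \<pi> P f k
    = autocov n \<pi> P g k - 2 * autocov n \<pi> P g (Suc k) + autocov n \<pi> P g (Suc (Suc k))"
proof -
  have left: "pi_inner n \<pi> f (mat_apply n (P ^\<^sub>m j) w)
      = pi_inner n \<pi> g (mat_apply n (P ^\<^sub>m j) w) - pi_inner n \<pi> g (mat_apply n (P ^\<^sub>m Suc j) w)"
    for j w by (rule pi_inner_mat_apply_pow_poisson_left[OF R c]) (fact f)
  have right: "pi_inner n \<pi> u (mat_apply n (P ^\<^sub>m j) f)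
      = pi_inner n \<pi> u (mat_apply n (P ^\<^sub>m j) g) - pi_inner n \<pi> u (mat_apply n (P ^\<^sub>m Suc j) g)"
    for u j by (rule pi_inner_mat_apply_pow_poisson_right[OF c]) (fact f)
  show ?thesis unfolding autocov_def left right by simp
qed

text \<open>The autocovariances of \<open>f\<close> are second differences of \<open>k \<mapsto> \<langle>g, P\<^sup>k g\<rangle>\<close>, so the double
  sum in \<^const>\<open>var_sum\<close> telescopes to \<open>N (2\<langle>f, g\<rangle> - \<langle>f, f\<rangle>)\<close> plus a bounded term.\<close>

lemma asymp_var_poisson:
  assumes P: "transition_mat n P" and R: "reversible n \<pi> P"
    and f: "\<And>x. x < n \<Longrightarrow> f x = g x - mat_apply n P g x"
  shows "asymp_var n \<pi> P f = 2 * pi_inner n \<pi> f g - pi_inner n \<pi> f f"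
proof -
  have c: "P \<in> carrier_mat n n" using P by (rule transition_mat_carrier)
  let ?b = "autocov n \<pi> P g"
  define C where "C = 2 * pi_inner n \<pi> f g - pi_inner n \<pi> f f"
  have "(\<Sum>x<n. \<pi> x * f x) = (\<Sum>x<n. \<pi> x * g x - \<pi> x * mat_apply n P g x)"
    using f by (intro sum.cong) (simp_all add: right_diff_distrib)
  then have mean: "(\<Sum>x<n. \<pi> x * f x) = 0"
    by (simp add: sum_subtractf sum_pi_mat_apply[OF P R])
  have "pi_inner n \<pi> g (mat_apply n (P ^\<^sub>m Suc 0) f) = ?b (Suc 0) - ?b (Suc (Suc 0))"
    unfolding autocov_def by (rule pi_inner_mat_apply_pow_poisson_right[OF c]) (fact f)
  moreover have "pi_inner n \<pi> f (mat_apply n (P ^\<^sub>m 0) f)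
      = pi_inner n \<pi> g (mat_apply n (P ^\<^sub>m 0) f) - pi_inner n \<pi> g (mat_apply n (P ^\<^sub>m Suc 0) f)"
    by (rule pi_inner_mat_apply_pow_poisson_left[OF R c]) (fact f)
  ultimately have "?b (Suc 0) - ?b (Suc (Suc 0)) = pi_inner n \<pi> f g - pi_inner n \<pi> f f"
    using pi_inner_commute[of n \<pi> g f] unfolding pi_inner_mat_apply_pow_zero[OF c] by linarith
  then have C: "autocov n \<pi> P f 0 + 2 * (?b 1 - ?b 2) = C"
    unfolding C_def autocov_def pi_inner_mat_apply_pow_zero[OF c] by (simp add: numeral_2_eq_2)
  have "var_sum n \<pi> P f N = real N * C - 2 * (?b 1 - ?b (Suc N))" for N
  proof -
    have "var_sum n \<pi> P f N
        = (\<Sum>i\<in>{1..N}. \<Sum>j\<in>{1..N}. autocov n \<pi> P f (if i \<le> j then j - i else i - j))"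
      by (rule var_sum_autocov[OF P R mean])
    also have "\<dots> = real N * (autocov n \<pi> P f 0 + 2 * (?b 1 - ?b 2)) - 2 * (?b 1 - ?b (Suc N))"
      by (rule sum_sum_second_difference[where \<gamma> = "autocov n \<pi> P f", OF autocov_poisson[OF R c f]])
    finally show ?thesis unfolding C .
  qed
  moreover obtain B where B: "\<bar>?b k\<bar> \<le> B" for k
    unfolding autocov_def using abs_pi_inner_transition_le[OF transition_mat_pow[OF P]] by blast
  have "\<bar>2 * (?b 1 - ?b (Suc N))\<bar> \<le> 4 * B" for N
    using B[of 1] B[of "Suc N"] by (auto simp: abs_le_iff)
  ultimately have "(\<lambda>N. var_sum n \<pi> P f N / real N) \<longlonglongrightarrow> C"
    by (rule LIMSEQ_linear_minus_bounded_div)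
  then show ?thesis unfolding asymp_var_def C_def by (rule limI)
qed

section \<open>Solvability of the Poisson equation\<close>

lemma mat_apply_pow_harmonic:
  assumes c: "P \<in> carrier_mat n n" and harmonic: "\<And>x. x < n \<Longrightarrow> mat_apply n P v x = v x"
    and z: "z < n"
  shows "mat_apply n (P ^\<^sub>m k) v z = v z"
proof -
  have "(mat_apply n P ^^ k) v z = v z" using z
  proof (induction k arbitrary: z)
    case (Suc k)
    then have "mat_apply n P ((mat_apply n P ^^ k) v) z = mat_apply n P v z"
      by (intro mat_apply_cong) simp
    then show ?case using harmonic[OF Suc.prems] by simp
  qed simp
  then show ?thesis using mat_apply_pow[OF c z] by simp
qed

lemma irreducible_harmonic_const:
  assumes P: "transition_mat n P" and irr: "irreducible_mc n P"
    and harmonic: "\<And>x. x < n \<Longrightarrow> mat_apply n P v x = v x"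
    and x: "x < n" and y: "y < n"
  shows "v x = v y"
proof -
  have pow: "mat_apply n (P ^\<^sub>m k) v z = v z" if "z < n" for k z
    by (rule mat_apply_pow_harmonic[OF transition_mat_carrier[OF P] _ that]) (fact harmonic)
  define M where "M = Max (v ` {..<n})"
  have "M \<in> v ` {..<n}" unfolding M_def using x by (intro Max_in) auto
  then obtain x0 where x0: "x0 < n" "v x0 = M" by auto
  have le: "v z \<le> M" if "z < n" for z unfolding M_def using that by (intro Max_ge) auto
  have max: "v z = M" if z: "z < n" for z
  proof -
    obtain k where k: "(P ^\<^sub>m k) $$ (x0, z) > 0"
      using irr x0(1) z unfolding irreducible_mc_def by blast
    have Pk: "transition_mat n (P ^\<^sub>m k)" using P by (rule transition_mat_pow)
    have "(\<Sum>w<n. (P ^\<^sub>m k) $$ (x0, w) * (M - v w))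
        = M * (\<Sum>w<n. (P ^\<^sub>m k) $$ (x0, w)) - mat_apply n (P ^\<^sub>m k) v x0"
      unfolding mat_apply_def
      by (simp add: left_diff_distrib right_diff_distrib sum_subtractf sum_distrib_left mult_ac)
    also have "\<dots> = 0"
      using Pk x0 pow[OF x0(1)] unfolding transition_mat_def by simp
    finally have "(\<Sum>w<n. (P ^\<^sub>m k) $$ (x0, w) * (M - v w)) = 0" .
    moreover have "\<forall>w\<in>{..<n}. 0 \<le> (P ^\<^sub>m k) $$ (x0, w) * (M - v w)"
      using Pk x0(1) le unfolding transition_mat_def by auto
    ultimately have "(P ^\<^sub>m k) $$ (x0, z) * (M - v z) = 0"
      using sum_nonneg_eq_0_iff[of "{..<n}" "\<lambda>w. (P ^\<^sub>m k) $$ (x0, w) * (M - v w)"] z by auto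
    then show ?thesis using k by simp
  qed
  show ?thesis using max[OF x] max[OF y] by simp
qed

text \<open>\<open>I - P + \<one> \<pi>\<^sup>T\<close>, the inverse of Kemeny and Snell's fundamental matrix.\<close>

definition poisson_mat :: "nat \<Rightarrow> (nat \<Rightarrow> real) \<Rightarrow> real mat \<Rightarrow> real mat" where
  "poisson_mat n \<pi> P = mat n n (\<lambda>(i, j). (if i = j then 1 else 0) - P $$ (i, j) + \<pi> j)"

lemma poisson_mat_carrier: "poisson_mat n \<pi> P \<in> carrier_mat n n"
  unfolding poisson_mat_def by simp

lemma poisson_mat_mult_vec:
  assumes v: "v \<in> carrier_vec n" and i: "i < n"
  shows "(poisson_mat n \<pi> P *\<^sub>v v) $ i
    = v $ i - mat_apply n P (\<lambda>j. v $ j) i + (\<Sum>j<n. \<pi> j * v $ j)"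
proof -
  have "(poisson_mat n \<pi> P *\<^sub>v v) $ i
      = (\<Sum>j<n. ((if i = j then 1 else 0) - P $$ (i, j) + \<pi> j) * v $ j)"
    using v i unfolding poisson_mat_def by (simp add: scalar_prod_def atLeast0LessThan)
  also have "\<dots> = (\<Sum>j<n. (if i = j then v $ j else 0) - P $$ (i, j) * v $ j + \<pi> j * v $ j)"
    by (intro sum.cong) (auto simp: algebra_simps)
  also have "\<dots> = v $ i - mat_apply n P (\<lambda>j. v $ j) i + (\<Sum>j<n. \<pi> j * v $ j)"
    using i by (simp add: mat_apply_def sum.distrib sum_subtractf)
  finally show ?thesis .
qed

lemma sum_pi_poisson_operator:
  assumes P: "transition_mat n P" and R: "reversible n \<pi> P" and pd: "prob_dist n \<pi>"
  shows "(\<Sum>x<n. \<pi> x * (w x - mat_apply n P w x + c)) = c"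
  using sum_pi_mat_apply[OF P R, of w] pd unfolding prob_dist_def
  by (simp add: distrib_left right_diff_distrib sum.distrib sum_subtractf
      sum_distrib_right[symmetric])

lemma det_poisson_mat_nonzero:
  assumes P: "transition_mat n P" and R: "reversible n \<pi> P" and pd: "prob_dist n \<pi>"
    and irr: "irreducible_mc n P"
  shows "det (poisson_mat n \<pi> P) \<noteq> 0"
proof
  assume "det (poisson_mat n \<pi> P) = 0"
  then obtain v where v: "v \<in> carrier_vec n" "v \<noteq> 0\<^sub>v n" "poisson_mat n \<pi> P *\<^sub>v v = 0\<^sub>v n"
    using det_0_iff_vec_prod_zero_field[OF poisson_mat_carrier] by blast
  define w where "w j = v $ j" for j
  define s where "s = (\<Sum>j<n. \<pi> j * w j)"
  have kernel: "w x - mat_apply n P w x + s = 0" if "x < n" for x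
    using poisson_mat_mult_vec[OF v(1) that, of \<pi> P] v(3) that unfolding w_def s_def by simp
  then have "s = 0"
    using sum_pi_poisson_operator[OF P R pd, of w s] by simp
  then have harmonic: "mat_apply n P w x = w x" if "x < n" for x
    using kernel[OF that] by simp
  have "w x = 0" if x: "x < n" for x
  proof -
    have "s = (\<Sum>y<n. \<pi> y * w x)"
      unfolding s_def using irreducible_harmonic_const[OF P irr harmonic _ x] by (intro sum.cong) auto
    then show ?thesis
      using \<open>s = 0\<close> pd unfolding prob_dist_def by (simp add: sum_distrib_right[symmetric])
  qed
  then have "v = 0\<^sub>v n" using v(1) unfolding w_def by (intro eq_vecI) auto
  with v(2) show False ..
qed

lemma poisson_equation_solvable:
  assumes P: "transition_mat n P" and R: "reversible n \<pi> P" and pd: "prob_dist n \<pi>"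
    and irr: "irreducible_mc n P" and mean: "(\<Sum>x<n. \<pi> x * f x) = 0"
  obtains g where "\<And>x. x < n \<Longrightarrow> f x = g x - mat_apply n P g x"
proof -
  let ?A = "poisson_mat n \<pi> P"
  obtain B where B: "B \<in> carrier_mat n n" "?A * B = 1\<^sub>m n"
    using det_non_zero_imp_unit[OF poisson_mat_carrier det_poisson_mat_nonzero[OF P R pd irr]]
    unfolding Units_def ring_mat_def by auto
  define gv where "gv = B *\<^sub>v vec n f"
  have gv: "gv \<in> carrier_vec n" unfolding gv_def using B by simp
  have "?A *\<^sub>v gv = (?A * B) *\<^sub>v vec n f"
    unfolding gv_def by (rule assoc_mult_mat_vec[symmetric, OF poisson_mat_carrier B(1)]) simp
  then have solution: "?A *\<^sub>v gv = vec n f" using B by simp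
  define g where "g j = gv $ j" for j
  define s where "s = (\<Sum>j<n. \<pi> j * g j)"
  have eq: "f x = g x - mat_apply n P g x + s" if "x < n" for x
    using poisson_mat_mult_vec[OF gv that, of \<pi> P] solution that unfolding g_def s_def by simp
  then have "(\<Sum>x<n. \<pi> x * f x) = (\<Sum>x<n. \<pi> x * (g x - mat_apply n P g x + s))"
    by (intro sum.cong) auto
  then have "s = 0" using mean sum_pi_poisson_operator[OF P R pd] by simp
  then show ?thesis using eq that by simp
qed

section \<open>Comparing the quadratic forms of \<open>P\<close> and \<open>Q\<close>\<close>

lemma double_sum_supported:
  fixes F :: "nat \<Rightarrow> nat \<Rightarrow> real"
  assumes T: "T \<subseteq> {..<n}" and h: "\<And>z. z \<notin> T \<Longrightarrow> h z = 0"
  shows "(\<Sum>a<n. \<Sum>b<n. F a b * h a * h b) = (\<Sum>a\<in>T. \<Sum>b\<in>T. F a b * h a * h b)"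
proof -
  have inner: "(\<Sum>b<n. F a b * h a * h b) = (\<Sum>b\<in>T. F a b * h a * h b)" for a
    by (rule sum.mono_neutral_right) (use T h in auto)
  show ?thesis unfolding inner by (rule sum.mono_neutral_right) (use T h in auto)
qed

text \<open>If some diagonal entry of \<open>D\<close> is positive, an indicator function works; otherwise the
  trace condition makes the diagonal vanish, and a function supported on two points picks up
  the nonzero off-diagonal entry.\<close>

lemma trace_zero_form_pos:
  fixes \<pi> :: "nat \<Rightarrow> real" and D :: "nat \<Rightarrow> nat \<Rightarrow> real"
  assumes pos: "\<And>x. x < n \<Longrightarrow> \<pi> x > 0"
    and sym: "\<And>x y. x < n \<Longrightarrow> y < n \<Longrightarrow> \<pi> x * D x y = \<pi> y * D y x"
    and tr: "(\<Sum>x<n. D x x) = 0"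
    and nz: "x0 < n" "y0 < n" "D x0 y0 \<noteq> 0"
  obtains h where "(\<Sum>x<n. \<Sum>y<n. \<pi> x * D x y * h x * h y) > 0"
proof (cases "\<exists>x<n. D x x > 0")
  case True
  then obtain p where p: "p < n" "D p p > 0" by blast
  define h where "h z = (if z = p then 1 else 0::real)" for z
  have "(\<Sum>x<n. \<Sum>y<n. \<pi> x * D x y * h x * h y) = (\<Sum>x\<in>{p}. \<Sum>y\<in>{p}. \<pi> x * D x y * h x * h y)"
    by (rule double_sum_supported) (use p in \<open>auto simp: h_def\<close>)
  also have "\<dots> > 0" using pos[OF p(1)] p(2) by (simp add: h_def)
  finally show thesis by (rule that)
next
  case False
  then have "\<forall>x\<in>{..<n}. - D x x \<ge> 0" by auto
  then have diag: "D x x = 0" if "x < n" for x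
    using sum_nonneg_eq_0_iff[of "{..<n}" "\<lambda>x. - D x x"] tr that by (auto simp: sum_negf)
  have ne: "x0 \<noteq> y0" using nz diag by auto
  define s where "s = sgn (D x0 y0)"
  define h where "h z = (if z = x0 then 1 else if z = y0 then s else 0)" for z
  have "(\<Sum>x<n. \<Sum>y<n. \<pi> x * D x y * h x * h y)
      = (\<Sum>x\<in>{x0, y0}. \<Sum>y\<in>{x0, y0}. \<pi> x * D x y * h x * h y)"
    by (rule double_sum_supported) (use nz in \<open>auto simp: h_def\<close>)
  also have "\<dots> = 2 * \<pi> x0 * (D x0 y0 * s)"
    using diag[OF nz(1)] diag[OF nz(2)] sym[OF nz(1,2)] ne by (simp add: h_def algebra_simps)
  also have "\<dots> > 0"
    using pos[OF nz(1)] nz(3) unfolding s_def by (simp add: abs_sgn[symmetric])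
  finally show thesis by (rule that)
qed

lemma exists_form_gt_of_trace_eq:
  assumes pd: "prob_dist n \<pi>" and RP: "reversible n \<pi> P" and RQ: "reversible n \<pi> Q"
    and tr: "(\<Sum>i<n. P $$ (i, i)) = (\<Sum>i<n. Q $$ (i, i))"
    and ij: "i < n" "j < n" "P $$ (i, j) \<noteq> Q $$ (i, j)"
  obtains h where "pi_inner n \<pi> h (mat_apply n P h) > pi_inner n \<pi> h (mat_apply n Q h)"
proof -
  define D where "D x y = P $$ (x, y) - Q $$ (x, y)" for x y
  obtain h where h: "(\<Sum>x<n. \<Sum>y<n. \<pi> x * D x y * h x * h y) > 0"
  proof (rule trace_zero_form_pos)
    show "\<pi> x > 0" if "x < n" for x using pd that unfolding prob_dist_def by auto
    show "\<pi> x * D x y = \<pi> y * D y x" if "x < n" "y < n" for x y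
      using RP RQ that unfolding reversible_def D_def by (simp add: right_diff_distrib)
    show "(\<Sum>x<n. D x x) = 0" unfolding D_def using tr by (simp add: sum_subtractf)
  qed (use ij D_def in auto)
  have "(\<Sum>x<n. \<Sum>y<n. \<pi> x * D x y * h x * h y)
      = pi_inner n \<pi> h (mat_apply n P h) - pi_inner n \<pi> h (mat_apply n Q h)"
    unfolding pi_inner_mat_apply_eq_sum D_def by (simp add: algebra_simps sum_subtractf)
  then show thesis using h that by simp
qed

lemma pi_inner_poisson_solutions_diff:
  assumes R: "reversible n \<pi> P"
    and g: "\<And>x. x < n \<Longrightarrow> f x = g x - mat_apply n P g x"
    and h: "\<And>x. x < n \<Longrightarrow> f x = h x - mat_apply n Q h x"
  shows "pi_inner n \<pi> f g - pi_inner n \<pi> f h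
    = pi_inner n \<pi> h (mat_apply n P h) - pi_inner n \<pi> h (mat_apply n Q h)
      + (pi_inner n \<pi> (\<lambda>x. g x - h x) (\<lambda>x. g x - h x)
         - pi_inner n \<pi> (\<lambda>x. g x - h x) (mat_apply n P (\<lambda>x. g x - h x)))"
proof -
  let ?u = "\<lambda>x. g x - h x"
  have Pu: "pi_inner n \<pi> ?u (mat_apply n P ?u)
      = pi_inner n \<pi> ?u (\<lambda>x. g x - f x - mat_apply n P h x)"
    using g by (intro pi_inner_cong) (simp_all add: mat_apply_diff)
  have gPh: "pi_inner n \<pi> g (mat_apply n P h) = pi_inner n \<pi> g h - pi_inner n \<pi> f h"
  proof -
    have "pi_inner n \<pi> g (mat_apply n P h) = pi_inner n \<pi> (\<lambda>x. g x - f x) h"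
      unfolding reversible_self_adjoint[OF R] using g by (intro pi_inner_cong) simp_all
    then show ?thesis by (simp add: pi_inner_diff_left)
  qed
  have hf: "pi_inner n \<pi> h f = pi_inner n \<pi> h h - pi_inner n \<pi> h (mat_apply n Q h)"
  proof -
    have "pi_inner n \<pi> h f = pi_inner n \<pi> h (\<lambda>x. h x - mat_apply n Q h x)"
      using h by (intro pi_inner_cong) simp_all
    then show ?thesis unfolding pi_inner_diff_right .
  qed
  have commute: "pi_inner n \<pi> g f = pi_inner n \<pi> f g" "pi_inner n \<pi> h g = pi_inner n \<pi> g h"
    "pi_inner n \<pi> h f = pi_inner n \<pi> f h"
    by (simp_all add: pi_inner_commute)
  show ?thesis
    unfolding Pu using gPh hf commute by (simp add: pi_inner_diff_left pi_inner_diff_right)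
qed

lemma not_efficiency_dominates_if_form_gt:
  assumes pd: "prob_dist n \<pi>" and P: "transition_mat n P" and Q: "transition_mat n Q"
    and irr: "irreducible_mc n P" and RP: "reversible n \<pi> P" and RQ: "reversible n \<pi> Q"
    and gt: "pi_inner n \<pi> h (mat_apply n P h) > pi_inner n \<pi> h (mat_apply n Q h)"
  shows "\<not> efficiency_dominates n \<pi> P Q"
proof -
  define f where "f x = h x - mat_apply n Q h x" for x
  have "(\<Sum>x<n. \<pi> x * f x) = 0"
    unfolding f_def using sum_pi_mat_apply[OF Q RQ, of h] by (simp add: right_diff_distrib sum_subtractf)
  then obtain g where g: "\<And>x. x < n \<Longrightarrow> f x = g x - mat_apply n P g x"
    using poisson_equation_solvable[OF P RP pd irr] by blast
  have "pi_inner n \<pi> f g > pi_inner n \<pi> f h"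
    using pi_inner_poisson_solutions_diff[OF RP g, of h Q] pi_inner_mat_apply_le[OF P RP pd] gt
    by (smt (verit) f_def)
  moreover have "asymp_var n \<pi> Q f = 2 * pi_inner n \<pi> f h - pi_inner n \<pi> f f"
    by (rule asymp_var_poisson[OF Q RQ]) (simp add: f_def)
  ultimately have "asymp_var n \<pi> Q f < asymp_var n \<pi> P f"
    using asymp_var_poisson[OF P RP g] by simp
  then show ?thesis unfolding efficiency_dominates_def by (meson not_le)
qed

theorem corollary2:
  fixes n :: nat and \<pi> :: "nat \<Rightarrow> real" and P Q :: "real mat"
  assumes "prob_dist n \<pi>"
    and "transition_mat n P" and "transition_mat n Q"
    and "irreducible_mc n P" and "irreducible_mc n Q"
    and "reversible n \<pi> P" and "reversible n \<pi> Q"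
    and "char_poly P = char_poly Q"
    and "P \<noteq> Q"
  shows "\<not> efficiency_dominates n \<pi> P Q \<and> \<not> efficiency_dominates n \<pi> Q P"
proof -
  have cP: "P \<in> carrier_mat n n" and cQ: "Q \<in> carrier_mat n n"
    using assms(2,3) by (simp_all add: transition_mat_carrier)
  have tr: "(\<Sum>i<n. P $$ (i, i)) = (\<Sum>i<n. Q $$ (i, i))"
    using trace_eq_of_char_poly_eq[OF cP cQ assms(8)] .
  obtain i j where ij: "i < n" "j < n" "P $$ (i, j) \<noteq> Q $$ (i, j)"
    using assms(9) cP cQ by (metis carrier_matD eq_matI)
  obtain h1 where "pi_inner n \<pi> h1 (mat_apply n P h1) > pi_inner n \<pi> h1 (mat_apply n Q h1)"
    using exists_form_gt_of_trace_eq[OF assms(1,6,7) tr ij] .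
  then have "\<not> efficiency_dominates n \<pi> P Q"
    by (rule not_efficiency_dominates_if_form_gt[OF assms(1-4,6,7)])
  moreover obtain h2 where "pi_inner n \<pi> h2 (mat_apply n Q h2) > pi_inner n \<pi> h2 (mat_apply n P h2)"
    using exists_form_gt_of_trace_eq[OF assms(1,7,6) tr[symmetric] ij(1,2)] ij(3) by metis
  then have "\<not> efficiency_dominates n \<pi> Q P"
    by (rule not_efficiency_dominates_if_form_gt[OF assms(1,3,2,5,7,6)])
  ultimately show ?thesis ..
qed

end
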